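(* Let $p$ be a prime number and $G$ a transitive group of degree $p^{2}$. Then there exists $s\in\mathfrak{S}_{p^{2}}$ such that $sGs^{-1}$ contains $P_{1}$ or $P'_{1}$.
   Context: Transitive group of degree $p^2$: a subgroup of $\mathfrak{S}_{p^2}$ acting transitively on $\mathbb{Z}/p^2$. Identify $\mathbb{Z}/p^{2}$ with $\mathbb{F}_{p}\times\mathbb{F}_{p}$ via $a+pb\mapsto(a\bmod p,b\bmod p)$ ($0\le a,b\le p-1$). Let $\rho_{1}(i,j)=(i,j+1)$, $\rho_{2}(i,j)=(i+1,j)$; for $i_0\in\{0,\dots,p-1\}$, $z_{i_0}(i_0,j)=(i_0,j+1)$ and $z_{i_0}(i,j)=(i,j)$ for $i\ne i_0$. With $a_{i,j}=(-1)^{i-j}\binom{i}{j}$ for $i\ge j$ and $0$ otherwise, $\gamma_{n}:=z_{0}^{a_{p-n,0}}\cdots z_{p-1}^{a_{p-n,p-1}}$. Put $\tau:=z_{p-1}\rho_{2}$, $P_{1}:=\langle\tau,\gamma_{1}\rangle$ and $P'_{1}:=\langle\rho_{1},\rho_{2},\gamma_{1}\rangle$. *)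

theory Defs
  imports "HOL-Algebra.Sym_Groups" "HOL-Algebra.Generated_Groups" "HOL-Computational_Algebra.Primes"
begin

definition symN :: "nat \<Rightarrow> (nat \<Rightarrow> nat) monoid"
  where "symN n = \<lparr> carrier = { f. f permutes {0..<n} }, mult = (\<circ>), one = id \<rparr>"

text \<open>Identification Z/p^2 = F_p x F_p, a + p b \<mapsto> (a, b).\<close>
definition idf :: "nat \<Rightarrow> nat \<Rightarrow> nat \<times> nat"
  where "idf p k = (k mod p, k div p)"

definition idf_inv :: "nat \<Rightarrow> nat \<times> nat \<Rightarrow> nat"
  where "idf_inv p ij = fst ij + p * snd ij"

definition lift :: "nat \<Rightarrow> (nat \<times> nat \<Rightarrow> nat \<times> nat) \<Rightarrow> nat \<Rightarrow> nat"
  where "lift p f k = (if k < p^2 then idf_inv p (f (idf p k)) else k)"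

definition rho1 :: "nat \<Rightarrow> nat \<Rightarrow> nat"
  where "rho1 p = lift p (\<lambda>(i, j). (i, (j + 1) mod p))"

definition rho2 :: "nat \<Rightarrow> nat \<Rightarrow> nat"
  where "rho2 p = lift p (\<lambda>(i, j). ((i + 1) mod p, j))"

definition zz :: "nat \<Rightarrow> nat \<Rightarrow> nat \<Rightarrow> nat"
  where "zz p i0 = lift p (\<lambda>(i, j). if i = i0 then (i, (j + 1) mod p) else (i, j))"

definition acoef :: "nat \<Rightarrow> nat \<Rightarrow> int"
  where "acoef i j = (if j \<le> i then (-1) ^ (i - j) * int (i choose j) else 0)"

definition gamma :: "nat \<Rightarrow> nat \<Rightarrow> nat \<Rightarrow> nat"
  where "gamma p n = foldr (\<lambda>i g. (zz p i [^]\<^bsub>symN (p^2)\<^esub> acoef (p - n) i) \<circ> g) [0..<p] id"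

definition tau :: "nat \<Rightarrow> nat \<Rightarrow> nat"
  where "tau p = zz p (p - 1) \<circ> rho2 p"

definition P1 :: "nat \<Rightarrow> (nat \<Rightarrow> nat) set"
  where "P1 p = generate (symN (p^2)) {tau p, gamma p 1}"

definition P1' :: "nat \<Rightarrow> (nat \<Rightarrow> nat) set"
  where "P1' p = generate (symN (p^2)) {rho1 p, rho2 p, gamma p 1}"

definition transitive_group :: "nat \<Rightarrow> (nat \<Rightarrow> nat) set \<Rightarrow> bool"
  where "transitive_group n G \<longleftrightarrow> subgroup G (symN n) \<and>
           (\<forall>x\<in>{0..<n}. \<forall>y\<in>{0..<n}. \<exists>g\<in>G. g x = y)"

end

theory Submission
  imports Defs "HOL-Algebra.Sylow" "HOL-Algebra.Group_Action" "HOL-Algebra.Multiplicative_Group"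
begin

text \<open>A Sylow p-subgroup P of G is still transitive. Being a nontrivial p-group, P has a central
  element z of order p, and central elements of a transitive group fix no point, so the z-orbits are
  p blocks of size p, permuted by P. Take g in P moving the block of 0: the first return of that
  block to itself happens after a number of steps that divides the p-power order of g, exceeds 1 and
  is at most the number p of blocks, so it is p, and g^p 0 = z^c 0 with c < p. Then
  (a, b) \<mapsto> z^a g^b 0 is a bijection from F_p x F_p onto Z/p^2 on which z and g act by the
  same formulas as rho1 and rho2 if c = 0, and z^c and g as rho1 and tau (in a suitable labelling)
  otherwise. Relabelling along it conjugates these pairs into P, and gamma_1 = rho1 because all
  exponents a_{p-1,i} are congruent to 1 modulo p.\<close>

section \<open>Coordinates on {0..<p^2}\<close>

lemma coord_lt_sq: "(i::nat) < p \<Longrightarrow> j < p \<Longrightarrow> i + p * j < p^2"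
proof -
  assume "i < p" "j < p"
  then have "i + p * j < p * Suc j" by simp
  also have "\<dots> \<le> p * p" using \<open>j < p\<close> by (intro mult_le_mono2) simp
  finally show ?thesis by (simp add: power2_eq_square)
qed

lemma coord_cases:
  assumes "(k::nat) < p^2"
  obtains i j where "i < p" "j < p" "k = i + p * j"
proof
  have p: "p > 0" using assms by (cases p) auto
  show "k mod p < p" "k = k mod p + p * (k div p)" using p by simp_all
  show "k div p < p" using assms by (simp add: div_less_iff_less_mult power2_eq_square p)
qed

lemma coord_eq_iff: "(i::nat) < p \<Longrightarrow> i' < p \<Longrightarrow> i + p * j = i' + p * j' \<longleftrightarrow> i = i' \<and> j = j'"
proof
  assume a: "i < p" "i' < p" "i + p * j = i' + p * j'"
  then have "p > 0" by simp
  have "i = (i + p * j) mod p" "j = (i + p * j) div p" using a(1) \<open>p > 0\<close> by simp_all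
  moreover have "i' = (i' + p * j') mod p" "j' = (i' + p * j') div p" using a(2) \<open>p > 0\<close> by simp_all
  ultimately show "i = i' \<and> j = j'" using a(3) by metis
qed simp

lemma fun_eq_on_coords:
  fixes p :: nat
  assumes "\<And>i j. i < p \<Longrightarrow> j < p \<Longrightarrow> f (i + p * j) = g (i + p * j)"
    and "\<And>k. \<not> k < p^2 \<Longrightarrow> f k = g k"
  shows "f = g"
proof
  fix k show "f k = g k"
  proof (cases "k < p^2")
    case True
    then obtain i j where "i < p" "j < p" "k = i + p * j" by (rule coord_cases)
    then show ?thesis by (simp add: assms(1))
  qed (simp add: assms(2))
qed

lemma lift_coord: "i < p \<Longrightarrow> j < p \<Longrightarrow> lift p f (i + p * j) = fst (f (i, j)) + p * snd (f (i, j))"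
  using coord_lt_sq[of i p j] by (simp add: lift_def idf_def idf_inv_def)

lemma lift_outside: "\<not> k < p^2 \<Longrightarrow> lift p f k = k"
  by (simp add: lift_def)

lemma rho1_coord: "i < p \<Longrightarrow> j < p \<Longrightarrow> rho1 p (i + p * j) = i + p * ((j + 1) mod p)"
  by (simp add: rho1_def lift_coord)

lemma rho2_coord: "i < p \<Longrightarrow> j < p \<Longrightarrow> rho2 p (i + p * j) = (i + 1) mod p + p * j"
  by (simp add: rho2_def lift_coord)

lemma zz_coord:
  "i < p \<Longrightarrow> j < p \<Longrightarrow> zz p i0 (i + p * j) = (if i = i0 then i + p * ((j + 1) mod p) else i + p * j)"
  by (simp add: zz_def lift_coord)

lemma tau_coord:
  assumes "i < p" "j < p"
  shows "tau p (i + p * j) =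
    (if (i + 1) mod p = p - 1 then (i + 1) mod p + p * ((j + 1) mod p) else (i + 1) mod p + p * j)"
proof -
  have "(i + 1) mod p < p" using assms by simp
  then show ?thesis using assms by (simp add: tau_def rho2_coord zz_coord)
qed

lemma rho1_outside: "\<not> k < p^2 \<Longrightarrow> rho1 p k = k"
  by (simp add: rho1_def lift_outside)

lemma rho2_outside: "\<not> k < p^2 \<Longrightarrow> rho2 p k = k"
  by (simp add: rho2_def lift_outside)

lemma zz_outside: "\<not> k < p^2 \<Longrightarrow> zz p i0 k = k"
  by (simp add: zz_def lift_outside)

lemma funpow_fixes_outside: "(\<And>x. \<not> x < N \<Longrightarrow> f x = x) \<Longrightarrow> \<not> k < N \<Longrightarrow> (f ^^ m) k = k"
  by (induction m) auto

lemma zz_funpow_coord: "i < p \<Longrightarrow> j < p \<Longrightarrow>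
  (zz p i0 ^^ m) (i + p * j) = (if i = i0 then i + p * ((j + m) mod p) else i + p * j)"
proof (induction m)
  case (Suc m)
  then have "(j + m) mod p < p" by simp
  with Suc show ?case by (simp add: zz_coord mod_Suc_eq)
qed simp

lemma rho1_funpow_coord: "i < p \<Longrightarrow> j < p \<Longrightarrow> (rho1 p ^^ m) (i + p * j) = i + p * ((j + m) mod p)"
proof (induction m)
  case (Suc m)
  then have "(j + m) mod p < p" by simp
  with Suc show ?case by (simp add: rho1_coord mod_Suc_eq)
qed simp

lemma rho2_funpow_coord: "i < p \<Longrightarrow> j < p \<Longrightarrow> (rho2 p ^^ m) (i + p * j) = (i + m) mod p + p * j"
proof (induction m)
  case (Suc m)
  then have "(i + m) mod p < p" by simp
  with Suc show ?case by (simp add: rho2_coord mod_Suc_eq)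
qed simp

lemma zz_funpow_p: "zz p i0 ^^ p = id"
  by (rule fun_eq_on_coords[where p = p]) (auto simp: zz_funpow_coord funpow_fixes_outside[OF zz_outside])

lemma rho1_funpow_p: "rho1 p ^^ p = id"
  by (rule fun_eq_on_coords[where p = p]) (auto simp: rho1_funpow_coord funpow_fixes_outside[OF rho1_outside])

lemma rho2_funpow_p: "rho2 p ^^ p = id"
  by (rule fun_eq_on_coords[where p = p]) (auto simp: rho2_funpow_coord funpow_fixes_outside[OF rho2_outside])

lemma permutes_if_funpow_eq_id:
  assumes "f ^^ m = id" "m > 0" "\<And>x. x \<notin> S \<Longrightarrow> f x = x"
  shows "f permutes S"
proof -
  have "f \<circ> f ^^ (m - 1) = id" "f ^^ (m - 1) \<circ> f = id"
    using assms(1,2) by (metis Suc_diff_1 funpow_Suc_right funpow.simps(2))+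
  then have "bij f" by (metis o_bij)
  with assms(3) show ?thesis unfolding permutes_def by (metis bij_iff)
qed

lemma zz_permutes: "p > 0 \<Longrightarrow> zz p i0 permutes {0..<p^2}"
  by (rule permutes_if_funpow_eq_id[OF zz_funpow_p]) (auto simp: zz_outside)

lemma rho1_permutes: "p > 0 \<Longrightarrow> rho1 p permutes {0..<p^2}"
  by (rule permutes_if_funpow_eq_id[OF rho1_funpow_p]) (auto simp: rho1_outside)

lemma rho2_permutes: "p > 0 \<Longrightarrow> rho2 p permutes {0..<p^2}"
  by (rule permutes_if_funpow_eq_id[OF rho2_funpow_p]) (auto simp: rho2_outside)

lemma tau_permutes: "p > 0 \<Longrightarrow> tau p permutes {0..<p^2}"
  unfolding tau_def by (intro permutes_compose zz_permutes rho2_permutes)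

section \<open>Subgroups of symN n\<close>

lemma carrier_symN: "carrier (symN n) = {f. f permutes {0..<n}}"
  and mult_symN: "x \<otimes>\<^bsub>symN n\<^esub> y = x \<circ> y"
  and one_symN: "\<one>\<^bsub>symN n\<^esub> = id"
  by (simp_all add: symN_def)

lemma group_symN: "group (symN n)"
proof (rule groupI)
  fix x assume "x \<in> carrier (symN n)"
  then have "inv_into UNIV x \<in> carrier (symN n)" "inv_into UNIV x \<circ> x = id"
    by (auto simp: carrier_symN permutes_inv permutes_inv_o)
  then show "\<exists>y\<in>carrier (symN n). y \<otimes>\<^bsub>symN n\<^esub> x = \<one>\<^bsub>symN n\<^esub>"
    by (auto simp: mult_symN one_symN)
qed (simp_all add: carrier_symN mult_symN one_symN permutes_id permutes_compose comp_assoc)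

lemma pow_subgroup_symN: "f [^]\<^bsub>(symN n)\<lparr>carrier := H\<rparr>\<^esub> (k::nat) = f ^^ k"
  by (induction k) (simp_all add: symN_def funpow_swap1)

lemma pow_symN: "f [^]\<^bsub>symN n\<^esub> (k::nat) = f ^^ k"
  by (induction k) (simp_all add: symN_def funpow_swap1)

lemma subgroup_symN_permutes: "subgroup H (symN n) \<Longrightarrow> h \<in> H \<Longrightarrow> h permutes {0..<n}"
  using subgroup.subset carrier_symN by blast

lemma subgroup_symN_finite: "subgroup H (symN n) \<Longrightarrow> finite H"
proof -
  assume "subgroup H (symN n)"
  then have "H \<subseteq> {f. f permutes {0..<n}}" using subgroup_symN_permutes by blast
  then show ?thesis using finite_permutations[of "{0..<n}"] finite_subset by blast
qed

lemma group_action_subgroup_symN: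
  assumes H: "subgroup H (symN n)"
  shows "group_action ((symN n)\<lparr>carrier := H\<rparr>) {0..<n} (\<lambda>h. restrict h {0..<n})"
  unfolding group_action_def group_hom_def group_hom_axioms_def
proof (intro conjI homI)
  show "group ((symN n)\<lparr>carrier := H\<rparr>)" by (rule subgroup.subgroup_is_group[OF H group_symN])
  show "group (BijGroup {0..<n})" by (rule group_BijGroup)
  have bij: "restrict h {0..<n} \<in> Bij {0..<n}" if "h \<in> H" for h
  proof -
    have "bij_betw (restrict h {0..<n}) {0..<n} {0..<n}"
      using permutes_imp_bij[OF subgroup_symN_permutes[OF H that]] bij_betw_cong[of "{0..<n}"] by simp
    then show ?thesis unfolding Bij_def by simp
  qed
  then show "restrict h {0..<n} \<in> carrier (BijGroup {0..<n})"
    if "h \<in> carrier ((symN n)\<lparr>carrier := H\<rparr>)" for h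
    using that by (simp add: BijGroup_def)
  fix x y assume "x \<in> carrier ((symN n)\<lparr>carrier := H\<rparr>)" "y \<in> carrier ((symN n)\<lparr>carrier := H\<rparr>)"
  then have xy: "x \<in> H" "y \<in> H" by simp_all
  have "y k \<in> {0..<n}" if "k \<in> {0..<n}" for k
    using permutes_in_image[OF subgroup_symN_permutes[OF H xy(2)]] that by simp
  then have "compose {0..<n} (restrict x {0..<n}) (restrict y {0..<n}) = restrict (x \<circ> y) {0..<n}"
    unfolding compose_def by (intro restrict_ext) simp
  then show "restrict (x \<otimes>\<^bsub>(symN n)\<lparr>carrier := H\<rparr>\<^esub> y) {0..<n} =
      restrict x {0..<n} \<otimes>\<^bsub>BijGroup {0..<n}\<^esub> restrict y {0..<n}"
    using bij[OF xy(1)] bij[OF xy(2)] by (simp add: BijGroup_def symN_def)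
qed

lemma subgroup_symN_stabilizer:
  assumes H: "subgroup H (symN n)" and x: "x < n"
  shows "subgroup {h\<in>H. h x = x} (symN n)"
proof -
  interpret group_action "(symN n)\<lparr>carrier := H\<rparr>" "{0..<n}" "\<lambda>h. restrict h {0..<n}"
    by (rule group_action_subgroup_symN[OF H])
  have "subgroup {h\<in>H. h x = x} ((symN n)\<lparr>carrier := H\<rparr>)"
    using stabilizer_subgroup[of x] x by (simp add: stabilizer_def)
  then show ?thesis using group.incl_subgroup[OF group_symN H] by blast
qed

lemma subgroup_symN_orbit_stabilizer:
  assumes H: "subgroup H (symN n)" and x: "x < n"
  shows "card ((\<lambda>h. h x) ` H) * card {h\<in>H. h x = x} = card H"
proof -
  interpret group_action "(symN n)\<lparr>carrier := H\<rparr>" "{0..<n}" "\<lambda>h. restrict h {0..<n}"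
    by (rule group_action_subgroup_symN[OF H])
  have "orbit ((symN n)\<lparr>carrier := H\<rparr>) (\<lambda>h. restrict h {0..<n}) x = (\<lambda>h. h x) ` H"
    using x unfolding orbit_def by auto
  then show ?thesis using orbit_stabilizer_theorem[of x] x by (simp add: order_def stabilizer_def)
qed

abbreviation conj_symN :: "nat \<Rightarrow> (nat \<Rightarrow> nat) \<Rightarrow> (nat \<Rightarrow> nat) \<Rightarrow> nat \<Rightarrow> nat"
  where "conj_symN n s x \<equiv> inv\<^bsub>symN n\<^esub> s \<otimes>\<^bsub>symN n\<^esub> x \<otimes>\<^bsub>symN n\<^esub> s"

lemma conj_symN_eq_if_intertwines:
  assumes s: "s \<in> carrier (symN n)" and u: "u \<in> carrier (symN n)" and u': "u' \<in> carrier (symN n)"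
    and "s \<circ> u = u' \<circ> s"
  shows "conj_symN n s u' = u"
proof -
  interpret group "symN n" by (rule group_symN)
  have "inv\<^bsub>symN n\<^esub> s \<otimes>\<^bsub>symN n\<^esub> u' \<otimes>\<^bsub>symN n\<^esub> s
      = inv\<^bsub>symN n\<^esub> s \<otimes>\<^bsub>symN n\<^esub> (u' \<otimes>\<^bsub>symN n\<^esub> s)"
    using s u' by (simp add: m_assoc)
  also have "u' \<otimes>\<^bsub>symN n\<^esub> s = s \<otimes>\<^bsub>symN n\<^esub> u" using assms(4) by (simp add: mult_symN)
  also have "inv\<^bsub>symN n\<^esub> s \<otimes>\<^bsub>symN n\<^esub> (s \<otimes>\<^bsub>symN n\<^esub> u) = u"
    using s u by (simp add: m_assoc[symmetric])
  finally show ?thesis .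
qed

lemma subgroup_symN_funpow_closed:
  assumes "subgroup H (symN n)" and "h \<in> H"
  shows "h ^^ k \<in> H"
proof -
  interpret H: group "(symN n)\<lparr>carrier := H\<rparr>" by (rule subgroup.subgroup_is_group[OF assms(1) group_symN])
  show ?thesis using H.nat_pow_closed[of h k] assms(2) by (simp add: pow_subgroup_symN)
qed

lemma subgroup_symN_funpow_card:
  assumes "subgroup H (symN n)" and "h \<in> H"
  shows "h ^^ card H = id"
proof -
  interpret H: group "(symN n)\<lparr>carrier := H\<rparr>" by (rule subgroup.subgroup_is_group[OF assms(1) group_symN])
  have "h [^]\<^bsub>(symN n)\<lparr>carrier := H\<rparr>\<^esub> order ((symN n)\<lparr>carrier := H\<rparr>) = \<one>\<^bsub>symN n\<^esub>"
    using H.pow_order_eq_1[of h] subgroup_symN_finite[OF assms(1)] assms(2) by simp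
  then show ?thesis by (simp add: pow_subgroup_symN order_def one_symN)
qed

lemma generate_subset_conj_image:
  assumes s: "s \<in> carrier (symN n)" and G: "subgroup G (symN n)" and A: "A \<subseteq> carrier (symN n)"
    and conj: "\<And>a. a \<in> A \<Longrightarrow> conj_symN n s a \<in> G"
  shows "generate (symN n) A \<subseteq> (\<lambda>g. s \<circ> g \<circ> inv\<^bsub>symN n\<^esub> s) ` G"
proof
  interpret group "symN n" by (rule group_symN)
  let ?c = "conj_symN n s"
  have sx: "s \<otimes>\<^bsub>symN n\<^esub> (inv\<^bsub>symN n\<^esub> s \<otimes>\<^bsub>symN n\<^esub> x) = x"
    if "x \<in> carrier (symN n)" for x
    using s that by (simp add: m_assoc[symmetric])
  have gen: "h \<in> carrier (symN n)" if "h \<in> generate (symN n) A" for h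
    using generate_in_carrier[OF A] that by blast
  have cG: "?c h \<in> G" if "h \<in> generate (symN n) A" for h
    using that
  proof (induction h rule: generate.induct)
    case one then show ?case using s subgroup.one_closed[OF G] by simp
  next
    case (incl h) then show ?case using conj by simp
  next
    case (inv h)
    then have "h \<in> carrier (symN n)" using A by blast
    then have "?c (inv\<^bsub>symN n\<^esub> h) = inv\<^bsub>symN n\<^esub> (?c h)"
      using s by (simp add: inv_mult_group m_assoc)
    then show ?case using subgroup.m_inv_closed[OF G conj[OF inv]] by simp
  next
    case (eng h1 h2)
    then have "h1 \<in> carrier (symN n)" "h2 \<in> carrier (symN n)" using gen by blast+
    then have "?c (h1 \<otimes>\<^bsub>symN n\<^esub> h2) = ?c h1 \<otimes>\<^bsub>symN n\<^esub> ?c h2"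
      using s by (simp add: m_assoc sx)
    then show ?case using subgroup.m_closed[OF G eng.IH] by simp
  qed
  fix h assume h: "h \<in> generate (symN n) A"
  then have "h = s \<otimes>\<^bsub>symN n\<^esub> ?c h \<otimes>\<^bsub>symN n\<^esub> inv\<^bsub>symN n\<^esub> s"
    using s gen by (simp add: m_assoc sx)
  then show "h \<in> (\<lambda>g. s \<circ> g \<circ> inv\<^bsub>symN n\<^esub> s) ` G"
    using cG[OF h] by (auto simp: mult_symN)
qed

section \<open>The element gamma_1\<close>

lemma choose_pred_prime_cong:
  assumes p: "prime p" and "i < p"
  shows "int p dvd int ((p - 1) choose i) - (-1) ^ i"
  using assms(2)
proof (induction i)
  case (Suc i)
  have "Suc (p - 1) = p" using prime_gt_0_nat[OF p] by simp
  then have "p choose Suc i = ((p - 1) choose i) + ((p - 1) choose Suc i)"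
    by (metis binomial_Suc_Suc)
  then have e: "int ((p - 1) choose Suc i) - (-1) ^ Suc i
      = int (p choose Suc i) - (int ((p - 1) choose i) - (-1) ^ i)"
    by simp
  have "p dvd p choose Suc i" using Suc.prems p by (intro dvd_choose_prime) auto
  then have "int p dvd int (p choose Suc i)" by simp
  then show ?case unfolding e using Suc by (simp add: dvd_diff)
qed simp

lemma acoef_pred_prime_cong:
  assumes p: "prime p" and i: "i < p"
  shows "int p dvd acoef (p - 1) i - 1"
proof -
  have "acoef (p - 1) i - 1
      = (-1) ^ (p - 1 - i) * (int ((p - 1) choose i) - (-1) ^ i) + ((-1) ^ (p - 1 - i) * (-1) ^ i - 1)"
    using i by (simp add: acoef_def algebra_simps)
  also have "(-1) ^ (p - 1 - i) * (-1) ^ i = ((-1::int) ^ (p - 1))"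
  proof -
    have "p - 1 - i + i = p - 1" using i by simp
    then show ?thesis by (metis power_add)
  qed
  finally have e: "acoef (p - 1) i - 1
      = (-1) ^ (p - 1 - i) * (int ((p - 1) choose i) - (-1) ^ i) + ((-1::int) ^ (p - 1) - 1)" .
  have "int p dvd (-1::int) ^ (p - 1) - 1"
  proof (cases "p = 2")
    case False
    then have "odd p" using p prime_odd_nat prime_ge_2_nat[OF p] by simp
    then show ?thesis by simp
  qed simp
  then show ?thesis unfolding e using choose_pred_prime_cong[OF p i] by (simp add: dvd_add)
qed

lemma zz_int_pow_eq_self:
  assumes p: "p > 0" and e: "int p dvd e - 1"
  shows "zz p i [^]\<^bsub>symN (p^2)\<^esub> (e::int) = zz p i"
proof -
  interpret G: group "symN (p^2)" by (rule group_symN)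
  have c: "zz p i \<in> carrier (symN (p^2))" using zz_permutes[OF p] by (simp add: carrier_symN)
  have "zz p i [^]\<^bsub>symN (p^2)\<^esub> p = \<one>\<^bsub>symN (p^2)\<^esub>"
    by (simp add: pow_symN zz_funpow_p one_symN)
  then have "int (G.ord (zz p i)) dvd e - 1"
    using G.pow_eq_id[OF c] e by (meson dvd_trans int_dvd_int_iff)
  then have "zz p i [^]\<^bsub>symN (p^2)\<^esub> (e - 1) = \<one>\<^bsub>symN (p^2)\<^esub>"
    using G.int_pow_eq_id[OF c] by simp
  then show ?thesis
    using G.int_pow_mult[OF c, of 1 "e - 1"] c by simp
qed

lemma foldr_zz_coord:
  assumes "distinct xs" "i < p" "j < p"
  shows "foldr (\<lambda>a g. zz p a \<circ> g) xs id (i + p * j)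
    = (if i \<in> set xs then i + p * ((j + 1) mod p) else i + p * j)"
  using assms
proof (induction xs)
  case (Cons a xs)
  then have "(j + 1) mod p < p" by simp
  with Cons show ?case by (auto simp: zz_coord)
qed simp

lemma foldr_zz_outside: "\<not> k < p^2 \<Longrightarrow> foldr (\<lambda>a g. zz p a \<circ> g) xs id k = k"
  by (induction xs) (auto simp: zz_outside)

lemma gamma_1_eq_rho1: "prime p \<Longrightarrow> gamma p 1 = rho1 p"
proof -
  assume p: "prime p"
  have "gamma p 1 = foldr (\<lambda>a g. zz p a \<circ> g) [0..<p] id"
    unfolding gamma_def
  proof (rule foldr_cong)
    fix i g assume "i \<in> set [0..<p]"
    then show "zz p i [^]\<^bsub>symN (p^2)\<^esub> acoef (p - 1) i \<circ> g = zz p i \<circ> g"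
      using zz_int_pow_eq_self[OF prime_gt_0_nat[OF p] acoef_pred_prime_cong[OF p]] by simp
  qed simp_all
  also have "\<dots> = rho1 p"
    by (rule fun_eq_on_coords[where p = p])
      (auto simp: foldr_zz_coord rho1_coord foldr_zz_outside rho1_outside)
  finally show ?thesis .
qed

section \<open>Fixed points of p-groups\<close>

lemma (in group_action) orbit_subset: "x \<in> E \<Longrightarrow> orbit G \<phi> x \<subseteq> E"
  using orbits_coverture unfolding orbits_def by blast

lemma (in group_action) prime_dvd_card_orbit:
  assumes fin: "finite E" and ordG: "order G = p ^ a" and p: "prime p" and x: "x \<in> E"
    and g: "g \<in> carrier G" "\<phi> g x \<noteq> x"
  shows "p dvd card (orbit G \<phi> x)"
proof -
  have "card (orbit G \<phi> x) dvd p ^ a"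
    using orbit_stabilizer_theorem[OF x] ordG by (metis dvd_triv_left)
  then obtain i where i: "card (orbit G \<phi> x) = p ^ i" using divides_primepow_nat[OF p] by blast
  have "{x, \<phi> g x} \<subseteq> orbit G \<phi> x" using orbit_refl[OF x] g unfolding orbit_def by blast
  then have "card {x, \<phi> g x} \<le> card (orbit G \<phi> x)"
    using card_mono fin finite_subset orbit_subset[OF x] by blast
  then have "i \<noteq> 0" using i g(2) by (cases i) auto
  then show ?thesis using i by simp
qed

lemma (in group_action) prime_dvd_card_fixed_points:
  assumes fin: "finite E" and ordG: "order G = p ^ a" and p: "prime p" and pE: "p dvd card E"
  shows "p dvd card {x\<in>E. \<forall>g\<in>carrier G. \<phi> g x = x}"
proof -
  interpret G: group G using group_hom group_hom.axioms(1) by blast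
  define Fix where "Fix = {x\<in>E. \<forall>g\<in>carrier G. \<phi> g x = x}"
  have orbit_fixed: "orbit G \<phi> x = {x}" if "x \<in> Fix" for x
    using that G.one_closed unfolding Fix_def orbit_def by (auto intro!: exI[of _ "\<one>\<^bsub>G\<^esub>"])
  have orbit_moved: "y \<notin> Fix" if x: "x \<in> E" "x \<notin> Fix" and y: "y \<in> orbit G \<phi> x" for x y
  proof
    assume "y \<in> Fix"
    moreover have "x \<in> orbit G \<phi> y" using orbit_sym[OF x(1)] orbit_subset[OF x(1)] y by blast
    ultimately show False using orbit_fixed[of y] x(2) by simp
  qed
  have p_dvd_orbit: "p dvd card (orbit G \<phi> x)" if x: "x \<in> E" "x \<notin> Fix" for x
    using x prime_dvd_card_orbit[OF fin ordG p x(1)] unfolding Fix_def by blast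
  have orbit_sum: "p dvd (\<Sum>y\<in>orb. if y \<in> Fix then 0 else 1::nat)" if orb: "orb \<in> orbits G E \<phi>" for orb
  proof -
    obtain x where x: "x \<in> E" "orb = orbit G \<phi> x" using orb unfolding orbits_def by blast
    show ?thesis
    proof (cases "x \<in> Fix")
      case True then show ?thesis using x orbit_fixed by simp
    next
      case False
      have "(\<Sum>y\<in>orb. if y \<in> Fix then 0 else 1::nat) = (\<Sum>y\<in>orb. 1)"
        using x orbit_moved[OF x(1) False] by (intro sum.cong) auto
      then have "(\<Sum>y\<in>orb. if y \<in> Fix then 0 else 1::nat) = card orb" by simp
      then show ?thesis using x p_dvd_orbit[OF x(1) False] by simp
    qed
  qed
  have Fix_sub: "Fix \<subseteq> E" unfolding Fix_def by blast
  have "card (E - Fix) = (\<Sum>y\<in>E. if y \<in> Fix then 0 else 1::nat)"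
    using fin Fix_sub by (simp add: sum.If_cases Diff_eq)
  also have "\<dots> = (\<Sum>orb\<in>orbits G E \<phi>. \<Sum>y\<in>orb. if y \<in> Fix then 0 else 1::nat)"
    by (rule disjoint_sum[OF fin, symmetric])
  finally have "p dvd card (E - Fix)" using orbit_sum by (simp add: dvd_sum)
  then have "p dvd card E - card Fix" using fin Fix_sub by (simp add: card_Diff_subset finite_subset)
  from dvd_diffD1[OF this pE card_mono[OF fin Fix_sub]] show ?thesis unfolding Fix_def .
qed

lemma (in group) p_group_center_nontrivial:
  assumes fin: "finite (carrier G)" and ordG: "order G = p ^ a" and a: "a \<ge> 1" and p: "prime p"
  shows "\<exists>z\<in>carrier G. z \<noteq> \<one> \<and> (\<forall>g\<in>carrier G. g \<otimes> z = z \<otimes> g)"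
proof -
  interpret by_conj: group_action G "carrier G" "\<lambda>g. \<lambda>h\<in>carrier G. g \<otimes> h \<otimes> inv g"
    by (rule action_by_conjugation)
  define Z where "Z = {x\<in>carrier G. \<forall>g\<in>carrier G. (\<lambda>h\<in>carrier G. g \<otimes> h \<otimes> inv g) x = x}"
  have "p dvd card (carrier G)" using ordG a unfolding order_def by (simp add: dvd_power)
  then have "p dvd card Z" unfolding Z_def by (rule by_conj.prime_dvd_card_fixed_points[OF fin ordG p])
  moreover have "\<one> \<in> Z" "finite Z" using fin unfolding Z_def by simp_all
  then have "card Z > 0" by (auto simp: card_gt_0_iff)
  ultimately have "card Z \<ge> 2"
    using prime_ge_2_nat[OF p] dvd_imp_le[of p "card Z"] by simp
  have "\<exists>z\<in>Z. z \<noteq> \<one>"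
  proof (rule ccontr)
    assume "\<not> (\<exists>z\<in>Z. z \<noteq> \<one>)"
    then have "card Z \<le> card {\<one>}" by (intro card_mono) auto
    then show False using \<open>card Z \<ge> 2\<close> by simp
  qed
  then obtain z where zZ: "z \<in> Z" and "z \<noteq> \<one>" by blast
  have "g \<otimes> z = z \<otimes> g" if g: "g \<in> carrier G" for g
  proof -
    have z: "z \<in> carrier G" using zZ unfolding Z_def by simp
    then have "g \<otimes> z = g \<otimes> z \<otimes> inv g \<otimes> g" using g by (simp add: m_assoc)
    also have "g \<otimes> z \<otimes> inv g = z" using zZ g z unfolding Z_def by auto
    finally show ?thesis .
  qed
  then show ?thesis using zZ \<open>z \<noteq> \<one>\<close> unfolding Z_def by blast
qed

lemma (in group) central_element_of_order_prime:
  assumes fin: "finite (carrier G)" and ordG: "order G = p ^ a" and a: "a \<ge> 1" and p: "prime p"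
  shows "\<exists>z\<in>carrier G. z [^] p = \<one> \<and> (\<forall>j. 0 < j \<longrightarrow> j < p \<longrightarrow> z [^] j \<noteq> \<one>)
    \<and> (\<forall>g\<in>carrier G. g \<otimes> z = z \<otimes> g)"
proof -
  obtain z0 where z0: "z0 \<in> carrier G" and z0ne: "z0 \<noteq> \<one>"
    and central0: "\<And>g. g \<in> carrier G \<Longrightarrow> g \<otimes> z0 = z0 \<otimes> g"
    using p_group_center_nontrivial[OF assms] by blast
  have "ord z0 dvd p ^ a" using ord_dvd_group_order[OF z0] ordG by simp
  then obtain k where k: "ord z0 = p ^ k" using divides_primepow_nat[OF p] by blast
  have "k \<noteq> 0"
  proof
    assume "k = 0"
    then have "z0 [^] (1::nat) = \<one>" using pow_eq_id[OF z0, of 1] k by simp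
    then show False using z0 z0ne by simp
  qed
  then have pk: "p ^ k = p ^ (k - 1) * p" by (metis Suc_diff_1 neq0_conv power_Suc2)
  define z where "z = z0 [^] (p ^ (k - 1))"
  have z: "z \<in> carrier G" unfolding z_def using z0 by simp
  have z_pow: "z [^] j = \<one> \<longleftrightarrow> p dvd j" for j :: nat
  proof -
    have "z [^] j = z0 [^] (p ^ (k - 1) * j)" unfolding z_def using z0 by (simp add: nat_pow_pow)
    then have "z [^] j = \<one> \<longleftrightarrow> p ^ k dvd p ^ (k - 1) * j" using pow_eq_id[OF z0] k by simp
    also have "\<dots> \<longleftrightarrow> p dvd j" unfolding pk using prime_gt_0_nat[OF p] by simp
    finally show ?thesis .
  qed
  have "z [^] p = \<one>" using z_pow by simp
  moreover have "\<forall>j. 0 < j \<longrightarrow> j < p \<longrightarrow> z [^] j \<noteq> \<one>" using z_pow by (auto dest: dvd_imp_le)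
  moreover have "\<forall>g\<in>carrier G. g \<otimes> z = z \<otimes> g"
    unfolding z_def using group_commutes_pow[OF _ z0] central0 z0 by simp
  ultimately show ?thesis using z by blast
qed

section \<open>Transitive p-subgroups and blocks\<close>

lemma transitive_group_card:
  assumes "transitive_group n G" and "0 < n"
  shows "card G = n * card {h\<in>G. h 0 = 0}"
proof -
  have G: "subgroup G (symN n)" and trans: "\<And>y. y < n \<Longrightarrow> \<exists>g\<in>G. g 0 = y"
    using assms unfolding transitive_group_def by auto
  have "(\<lambda>h. h 0) ` G = {0..<n}"
  proof
    show "(\<lambda>h. h 0) ` G \<subseteq> {0..<n}"
      using permutes_in_image[OF subgroup_symN_permutes[OF G]] \<open>0 < n\<close> by auto
    show "{0..<n} \<subseteq> (\<lambda>h. h 0) ` G" using trans by (fastforce simp: image_iff)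
  qed
  then show ?thesis using subgroup_symN_orbit_stabilizer[OF G \<open>0 < n\<close>] by simp
qed

lemma sylow_subgroup_symN:
  assumes p: "prime p" and G: "subgroup G (symN n)"
  shows "\<exists>P. subgroup P (symN n) \<and> P \<subseteq> G \<and> card P = p ^ multiplicity p (card G)"
proof -
  have "p ^ multiplicity p (card G) dvd card G" by (rule multiplicity_dvd)
  then have "order ((symN n)\<lparr>carrier := G\<rparr>) = p ^ multiplicity p (card G) * (card G div p ^ multiplicity p (card G))"
    by (simp add: order_def)
  then obtain P where P: "subgroup P ((symN n)\<lparr>carrier := G\<rparr>)" "card P = p ^ multiplicity p (card G)"
    using sylow_thm[OF p subgroup.subgroup_is_group[OF G group_symN]] subgroup_symN_finite[OF G] by auto
  moreover have "subgroup P (symN n)" using group.incl_subgroup[OF group_symN G P(1)] .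
  ultimately show ?thesis using subgroup.subset[OF P(1)] by auto
qed

lemma card_stabilizer_dvd:
  assumes H: "subgroup H (symN n)" and K: "subgroup K (symN n)" and "H \<subseteq> K" and x: "x < n"
  shows "card {h\<in>H. h x = x} dvd card {h\<in>K. h x = x}"
proof -
  define H0 K0 where "H0 = {h\<in>H. h x = x}" and "K0 = {h\<in>K. h x = x}"
  have "subgroup H0 (symN n)" "subgroup K0 (symN n)"
    unfolding H0_def K0_def using subgroup_symN_stabilizer[OF H x] subgroup_symN_stabilizer[OF K x] .
  moreover have "H0 \<subseteq> K0" unfolding H0_def K0_def using \<open>H \<subseteq> K\<close> by blast
  ultimately have "subgroup H0 ((symN n)\<lparr>carrier := K0\<rparr>)" using group.subgroup_incl[OF group_symN] by blast
  from group.lagrange[OF subgroup.subgroup_is_group[OF \<open>subgroup K0 (symN n)\<close> group_symN] this]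
  have "card (rcosets\<^bsub>(symN n)\<lparr>carrier := K0\<rparr>\<^esub> H0) * card H0 = card K0" by (simp add: order_def)
  then have "card H0 dvd card K0" by (metis dvd_triv_right)
  then show ?thesis unfolding H0_def K0_def .
qed

text \<open>The stabiliser of 0 in a Sylow subgroup P has p-power order dividing |G_0| = |G| / p^2,
  so its index in P is at least p^2.\<close>
lemma transitive_sylow_subgroup:
  assumes p: "prime p" and G: "transitive_group (p^2) G"
  shows "\<exists>P a. subgroup P (symN (p^2)) \<and> P \<subseteq> G \<and> card P = p ^ a \<and> (\<forall>y<p^2. \<exists>h\<in>P. h 0 = y)"
proof -
  have p0: "p > 0" using prime_gt_0_nat[OF p] .
  have Gs: "subgroup G (symN (p^2))" using G unfolding transitive_group_def by simp
  define a where "a = multiplicity p (card G)"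
  obtain P where Ps: "subgroup P (symN (p^2))" and PG: "P \<subseteq> G" and cP: "card P = p ^ a"
    using sylow_subgroup_symN[OF p Gs] unfolding a_def by blast
  define SG where "SG = {h\<in>G. h 0 = 0}"
  have cG: "card G = p^2 * card SG" unfolding SG_def by (rule transitive_group_card[OF G]) (simp add: p0)
  have "card G \<noteq> 0" using subgroup.one_closed[OF Gs] subgroup_symN_finite[OF Gs] by auto
  have np: "\<not> is_unit p" using p not_prime_unit by blast
  define SP where "SP = {h\<in>P. h 0 = 0}"
  have cP': "card ((\<lambda>h. h 0) ` P) * card SP = p ^ a"
    using subgroup_symN_orbit_stabilizer[OF Ps] p0 cP unfolding SP_def by simp
  have "card SP dvd card SG"
    unfolding SP_def SG_def by (rule card_stabilizer_dvd[OF Ps Gs PG]) (simp add: p0)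
  moreover have "card SP dvd p ^ a" unfolding cP'[symmetric] by (rule dvd_triv_right)
  then obtain e where e: "card SP = p ^ e" using divides_primepow_nat[OF p] by blast
  ultimately have "p ^ e * p ^ 2 dvd card G" using cG e by (simp add: mult.commute)
  then have "p ^ (e + 2) dvd card G" unfolding power_add .
  then have "e + 2 \<le> a" unfolding a_def by (rule multiplicity_geI[OF \<open>card G \<noteq> 0\<close> np])
  then have "card ((\<lambda>h. h 0) ` P) * p ^ e = p ^ (a - e) * p ^ e"
    using cP' e by (simp add: power_add[symmetric])
  then have "card ((\<lambda>h. h 0) ` P) = p ^ (a - e)" using p0 by simp
  moreover have "p ^ 2 \<le> p ^ (a - e)" using \<open>e + 2 \<le> a\<close> p0 by (intro power_increasing) auto
  moreover have "(\<lambda>h. h 0) ` P \<subseteq> {0..<p^2}"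
    using permutes_in_image[OF subgroup_symN_permutes[OF Ps]] p0 by auto
  ultimately have orbit: "(\<lambda>h. h 0) ` P = {0..<p^2}" by (intro card_seteq) auto
  have "\<exists>h\<in>P. h 0 = y" if "y < p^2" for y
  proof -
    have "y \<in> (\<lambda>h. h 0) ` P" using orbit that by simp
    then show ?thesis by blast
  qed
  then show ?thesis using Ps PG cP by blast
qed

lemma funpow_funpow_commute:
  assumes "\<And>y. f (h y) = h (f y)"
  shows "(f ^^ m) ((h ^^ n) y) = (h ^^ n) ((f ^^ m) y)"
proof -
  have "f ((h ^^ n) y) = (h ^^ n) (f y)" for y
    using assms by (induction n arbitrary: y) auto
  then show ?thesis by (induction m arbitrary: y) auto
qed

lemma commuting_perm_with_fixed_point_eq_id:
  assumes w: "w permutes {0..<n}" and trans: "\<And>y. y < n \<Longrightarrow> \<exists>h\<in>H. h 0 = y"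
    and inj: "\<And>h. h \<in> H \<Longrightarrow> inj h" and comm: "\<And>h x. h \<in> H \<Longrightarrow> h (w x) = w (h x)"
    and y: "y < n" "w y = y"
  shows "w = id"
proof
  obtain h0 where h0: "h0 \<in> H" "h0 0 = y" using trans y(1) by blast
  then have "h0 (w 0) = h0 0" using comm[OF h0(1), of 0] y(2) by simp
  then have w0: "w 0 = 0" using inj[OF h0(1)] by (simp add: inj_eq)
  fix x show "w x = id x"
  proof (cases "x < n")
    case True
    then obtain h where "h \<in> H" "h 0 = x" using trans by blast
    then show ?thesis using comm[of h 0] w0 by simp
  next
    case False then show ?thesis using w by (simp add: permutes_def)
  qed
qed

locale p_semiregular =
  fixes p :: nat and z :: "nat \<Rightarrow> nat"
  assumes p_pos: "0 < p"
    and z_permutes: "z permutes {0..<p^2}"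
    and z_funpow_p: "z ^^ p = id"
    and z_fixfree: "\<And>y k. y < p^2 \<Longrightarrow> 0 < k \<Longrightarrow> k < p \<Longrightarrow> (z ^^ k) y \<noteq> y"
begin

lemma z_funpow_mod: "(z ^^ (a mod p)) y = (z ^^ a) y"
  by (rule funpow_mod_eq) (simp add: z_funpow_p)

lemma z_funpow_in: "y < p^2 \<Longrightarrow> (z ^^ a) y < p^2"
  using permutes_in_image[OF permutes_funpow[OF z_permutes]] by simp

lemma z_funpow_inj:
  assumes "y < p^2" "a < p" "a' < p" "(z ^^ a) y = (z ^^ a') y"
  shows "a = a'"
proof -
  have ordered: "a = a'" if "a \<le> a'" "a' < p" "(z ^^ a) y = (z ^^ a') y" for a a'
  proof (rule ccontr)
    assume "a \<noteq> a'"
    have "(z ^^ a) ((z ^^ (a' - a)) y) = (z ^^ (a + (a' - a))) y" by (simp add: funpow_add)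
    then have "(z ^^ a) ((z ^^ (a' - a)) y) = (z ^^ a) y" using that by simp
    then have "(z ^^ (a' - a)) y = y"
      using inj_fn[OF permutes_inj[OF z_permutes]] by (simp add: inj_eq)
    then show False using z_fixfree[OF \<open>y < p^2\<close>, of "a' - a"] that \<open>a \<noteq> a'\<close> by simp
  qed
  show ?thesis
  proof (cases "a \<le> a'")
    case False then show ?thesis using ordered[of a' a] assms by simp
  qed (use ordered assms in blast)
qed

definition block :: "nat \<Rightarrow> nat set"
  where "block y = range (\<lambda>a. (z ^^ a) y)"

lemma block_self: "y \<in> block y"
  unfolding block_def by (rule range_eqI[of _ _ 0]) simp

lemma block_eq_image: "block y = (\<lambda>a. (z ^^ a) y) ` {0..<p}"
proof -
  have "(z ^^ a) y \<in> (\<lambda>a. (z ^^ a) y) ` {0..<p}" for a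
  proof (rule image_eqI)
    show "(z ^^ a) y = (z ^^ (a mod p)) y" by (rule z_funpow_mod[symmetric])
  qed (simp add: p_pos)
  then show ?thesis unfolding block_def by auto
qed

lemma card_block:
  assumes "y < p^2"
  shows "card (block y) = p"
proof -
  have "inj_on (\<lambda>a. (z ^^ a) y) {0..<p}" using z_funpow_inj[OF assms] by (intro inj_onI) simp
  then show ?thesis unfolding block_eq_image by (simp add: card_image)
qed

lemma block_subset: "y < p^2 \<Longrightarrow> block y \<subseteq> {0..<p^2}"
  unfolding block_def using z_funpow_in by auto

lemma block_eq_if_mem:
  assumes "y' \<in> block y"
  shows "block y' = block y"
proof -
  obtain a where a: "y' = (z ^^ a) y" using assms unfolding block_def by blast
  have "(z ^^ b) y' = (z ^^ (b + a)) y" for b using a by (simp add: funpow_add)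
  then have "block y' \<subseteq> block y" unfolding block_def by (auto simp del: funpow.simps)
  moreover have "(z ^^ b) y = (z ^^ (b + a * (p - 1))) y'" for b
  proof -
    have "a * (p - 1) + a = p * a" using p_pos by (cases p) (simp_all add: algebra_simps)
    then have "z ^^ (a * (p - 1) + a) = id" by (simp add: funpow_mult[symmetric] z_funpow_p)
    moreover have "(z ^^ (b + a * (p - 1))) y' = (z ^^ b) ((z ^^ (a * (p - 1) + a)) y)"
      using a by (simp add: funpow_add)
    ultimately show ?thesis by simp
  qed
  then have "block y \<subseteq> block y'" unfolding block_def by (auto simp del: funpow.simps)
  ultimately show ?thesis by blast
qed

lemma block_eq_if_meet: "block y \<inter> block y' \<noteq> {} \<Longrightarrow> block y = block y'"
  using block_eq_if_mem by blast

lemma image_block: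
  assumes "\<And>y. g (z y) = z (g y)"
  shows "(g ^^ k) ` block y = block ((g ^^ k) y)"
  unfolding block_def by (auto simp: funpow_funpow_commute[of g z, OF assms] image_iff)

end

lemma card_subgroup_symN_ge:
  assumes H: "subgroup H (symN n)" and trans: "\<And>y. y < n \<Longrightarrow> \<exists>h\<in>H. h 0 = y"
  shows "n \<le> card H"
proof -
  have "{0..<n} \<subseteq> (\<lambda>h. h 0) ` H" using trans by (fastforce simp: image_iff)
  then have "n \<le> card ((\<lambda>h. h 0) ` H)"
    using card_mono[OF finite_imageI[OF subgroup_symN_finite[OF H]]] by fastforce
  also have "\<dots> \<le> card H" using card_image_le[OF subgroup_symN_finite[OF H]] .
  finally show ?thesis .
qed

lemma transitive_p_subgroup_semiregular_center:
  assumes p: "prime p" and P: "subgroup P (symN (p^2))" and cP: "card P = p ^ a"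
    and trans: "\<And>y. y < p^2 \<Longrightarrow> \<exists>h\<in>P. h 0 = y"
  shows "\<exists>z\<in>P. p_semiregular p z \<and> (\<forall>h\<in>P. \<forall>y. h (z y) = z (h y))"
proof -
  define Pg where "Pg = (symN (p^2))\<lparr>carrier := P\<rparr>"
  interpret Pg: group Pg unfolding Pg_def by (rule subgroup.subgroup_is_group[OF P group_symN])
  have Pg_simps: "carrier Pg = P" "\<And>x y. x \<otimes>\<^bsub>Pg\<^esub> y = x \<circ> y" "\<one>\<^bsub>Pg\<^esub> = id"
    by (simp_all add: Pg_def symN_def)
  have Pg_pow: "x [^]\<^bsub>Pg\<^esub> (n::nat) = x ^^ n" for x n by (simp add: Pg_def pow_subgroup_symN)
  have p2: "p \<ge> 2" using prime_ge_2_nat[OF p] .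
  have perm: "\<And>h. h \<in> P \<Longrightarrow> h permutes {0..<p^2}" using subgroup_symN_permutes[OF P] .
  have "p^2 \<le> p ^ a" using card_subgroup_symN_ge[OF P trans] cP by simp
  moreover have "1 < p^2" using p2 by (intro one_less_power) auto
  ultimately have "a \<noteq> 0" by (intro notI) simp
  obtain z where zP: "z \<in> P" and z_p: "z ^^ p = id" and z_ne: "\<And>j. 0 < j \<Longrightarrow> j < p \<Longrightarrow> z ^^ j \<noteq> id"
    and z_central: "\<And>h. h \<in> P \<Longrightarrow> h \<circ> z = z \<circ> h"
    using Pg.central_element_of_order_prime[of p a] subgroup_symN_finite[OF P] cP \<open>a \<noteq> 0\<close> p
    unfolding Pg_simps Pg_pow order_def by auto
  have central: "h (z y) = z (h y)" if "h \<in> P" for h y using fun_cong[OF z_central[OF that]] by simp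
  have "(z ^^ k) y \<noteq> y" if y: "y < p^2" and k: "0 < k" "k < p" for y k
  proof
    assume "(z ^^ k) y = y"
    moreover have "z ^^ k \<in> P" using subgroup_symN_funpow_closed[OF P zP] .
    moreover have "\<And>h x. h \<in> P \<Longrightarrow> h ((z ^^ k) x) = (z ^^ k) (h x)"
      using funpow_funpow_commute[of _ z 1] central by simp
    ultimately have "z ^^ k = id"
      using commuting_perm_with_fixed_point_eq_id[OF perm trans _ _ y] permutes_inj[OF perm] by blast
    then show False using z_ne k by simp
  qed
  then have "p_semiregular p z" using p2 perm[OF zP] z_p by unfold_locales auto
  then show ?thesis using zP central by blast
qed

lemma shift_invariant_pred_eq_dvd:
  fixes Q :: "nat \<Rightarrow> bool"
  assumes Q0: "Q 0" and shift: "\<And>i j. Q i \<Longrightarrow> Q (i + j) = Q j" and "0 < N" "Q N"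
  obtains d where "0 < d" "\<And>k. Q k \<longleftrightarrow> d dvd k"
proof
  define d where "d = (LEAST k. 0 < k \<and> Q k)"
  have d: "0 < d" "Q d" unfolding d_def using LeastI[of "\<lambda>k. 0 < k \<and> Q k" N] assms(3,4) by auto
  have d_min: "\<not> Q r" if "0 < r" "r < d" for r
    using not_less_Least[of r "\<lambda>k. 0 < k \<and> Q k"] that unfolding d_def by blast
  have mult: "Q (d * q)" for q
  proof (induction q)
    case (Suc q) then show ?case using shift[OF d(2), of "d * q"] by simp
  qed (simp add: Q0)
  show "0 < d" by (fact d(1))
  fix k
  have "Q k \<longleftrightarrow> Q (k mod d)"
    using shift[OF mult, of "k div d" "k mod d"] by simp
  also have "\<dots> \<longleftrightarrow> k mod d = 0" using d_min[of "k mod d"] d(1) Q0 by auto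
  finally show "Q k \<longleftrightarrow> d dvd k" by (simp add: dvd_eq_mod_eq_0)
qed

lemma card_disjoint_family_le:
  assumes "finite X" and "\<And>i. i < d \<Longrightarrow> F i \<subseteq> X" and "\<And>i. i < d \<Longrightarrow> card (F i) = m"
    and "\<And>i j. i < d \<Longrightarrow> j < d \<Longrightarrow> i \<noteq> j \<Longrightarrow> F i \<inter> F j = {}"
  shows "d * m \<le> card X"
proof -
  have "finite (F i)" if "i < d" for i using assms(1,2) that finite_subset by blast
  then have "card (\<Union>i<d. F i) = (\<Sum>i<d. card (F i))"
    using assms(4) by (intro card_UN_disjoint) auto
  also have "\<dots> = d * m" using assms(3) by simp
  finally show ?thesis using assms(1,2) card_mono[of X "\<Union>i<d. F i"] by auto
qed

context p_semiregular
begin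

text \<open>The first d images of the block of 0 are pairwise disjoint blocks of size p inside a set of
  size p^2, whence d \<le> p.\<close>
lemma block_return_time:
  assumes g: "g permutes {0..<p^2}" and comm: "\<And>y. g (z y) = z (g y)"
    and N: "0 < N" "(g ^^ N) 0 = 0"
  obtains d where "0 < d" "d \<le> p" "\<And>k. (g ^^ k) 0 \<in> block 0 \<longleftrightarrow> d dvd k"
proof -
  define F where "F k = block ((g ^^ k) 0)" for k
  have inj: "inj (g ^^ i)" for i using inj_fn[OF permutes_inj[OF g]] .
  have F_shift: "F (i + j) = (g ^^ i) ` F j" for i j
    unfolding F_def using image_block[of g, OF comm, of i "(g ^^ j) 0"] by (simp add: funpow_add)
  have in_block_iff: "(g ^^ k) 0 \<in> block 0 \<longleftrightarrow> F k = F 0" for k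
    unfolding F_def using block_eq_if_mem[of "(g ^^ k) 0" 0] block_self[of "(g ^^ k) 0"] by auto
  obtain d where d: "0 < d" and d_dvd: "\<And>k. F k = F 0 \<longleftrightarrow> d dvd k"
  proof (rule shift_invariant_pred_eq_dvd[of "\<lambda>k. F k = F 0"])
    show "(F (i + j) = F 0) = (F j = F 0)" if Fi: "F i = F 0" for i j
    proof -
      have "F (i + j) = (g ^^ i) ` F j" "F 0 = (g ^^ i) ` F 0"
        using F_shift[of i j] F_shift[of i 0] Fi by simp_all
      then show ?thesis by (metis inj_image_eq_iff[OF inj[of i]])
    qed
    show "F N = F 0" using N by (simp add: F_def)
  qed (use N in simp_all)
  have "d * p \<le> card {0..<p^2}"
  proof (rule card_disjoint_family_le[where F = F])
    show "F i \<subseteq> {0..<p^2}" "card (F i) = p" for i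
      unfolding F_def using block_subset card_block permutes_in_image[OF permutes_funpow[OF g]] p_pos
      by simp_all
    have F_ne: "F i \<noteq> F j" if "i < j" "j < d" for i j
    proof
      assume "F i = F j"
      then have "(g ^^ i) ` F 0 = (g ^^ i) ` F (j - i)"
        using F_shift[of i 0] F_shift[of i "j - i"] that(1) by simp
      then have "F (j - i) = F 0" using inj by (simp add: inj_image_eq_iff)
      then show False using d_dvd[of "j - i"] that by (auto dest: dvd_imp_le)
    qed
    show "F i \<inter> F j = {}" if "i < d" "j < d" "i \<noteq> j" for i j
      using block_eq_if_meet F_ne[of i j] F_ne[of j i] that unfolding F_def by force
  qed simp
  then have "d \<le> p" using p_pos by (simp add: power2_eq_square)
  then show ?thesis using that d d_dvd in_block_iff by blast
qed

end

section \<open>Conjugating into a block frame\<close>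

definition relabel :: "'b set \<Rightarrow> ('b \<Rightarrow> nat) \<Rightarrow> ('b \<Rightarrow> nat) \<Rightarrow> nat \<Rightarrow> nat \<Rightarrow> nat"
  where "relabel B \<phi> \<psi> N k = (if k < N then \<psi> (inv_into B \<phi> k) else k)"

lemma relabel_permutes:
  assumes "bij_betw \<phi> B {0..<N}" and "bij_betw \<psi> B {0..<N}"
  shows "relabel B \<phi> \<psi> N permutes {0..<N}"
proof -
  have "bij_betw (\<psi> \<circ> inv_into B \<phi>) {0..<N} {0..<N}"
    using bij_betw_trans[OF bij_betw_inv_into[OF assms(1)] assms(2)] .
  then have "bij_betw (relabel B \<phi> \<psi> N) {0..<N} {0..<N}"
    by (rule bij_betw_cong[THEN iffD1, rotated]) (simp add: relabel_def)
  then show ?thesis by (rule bij_imp_permutes) (simp add: relabel_def)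
qed

lemma relabel_intertwines:
  assumes \<phi>: "bij_betw \<phi> B {0..<N}" and \<psi>: "bij_betw \<psi> B {0..<N}"
    and u: "u permutes {0..<N}" and u': "u' permutes {0..<N}"
    and f: "\<And>x. x \<in> B \<Longrightarrow> f x \<in> B"
    and u_\<phi>: "\<And>x. x \<in> B \<Longrightarrow> u (\<phi> x) = \<phi> (f x)"
    and u'_\<psi>: "\<And>x. x \<in> B \<Longrightarrow> u' (\<psi> x) = \<psi> (f x)"
  shows "relabel B \<phi> \<psi> N \<circ> u = u' \<circ> relabel B \<phi> \<psi> N"
proof
  fix k
  show "(relabel B \<phi> \<psi> N \<circ> u) k = (u' \<circ> relabel B \<phi> \<psi> N) k"
  proof (cases "k < N")
    case True
    then have "k \<in> \<phi> ` B" using \<phi> by (simp add: bij_betw_def)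
    then obtain x where x: "x \<in> B" "k = \<phi> x" by blast
    then have "\<phi> x < N" "\<phi> (f x) < N" using \<phi> f by (auto simp: bij_betw_def)
    then show ?thesis
      using x f u_\<phi> u'_\<psi> inv_into_f_f[OF bij_betw_imp_inj_on[OF \<phi>]] by (simp add: relabel_def)
  next
    case False
    then have "u k = k" "u' k = k" using u u' by (auto simp: permutes_def)
    then show ?thesis using False by (simp add: relabel_def)
  qed
qed

lemma bij_betw_coords_if_inj:
  fixes f :: "nat \<times> nat \<Rightarrow> nat"
  assumes "inj_on f ({0..<p} \<times> {0..<p})" and "\<And>a b. a < p \<Longrightarrow> b < p \<Longrightarrow> f (a, b) < p^2"
  shows "bij_betw f ({0..<p} \<times> {0..<p}) {0..<p^2}"
proof -
  have "card (f ` ({0..<p} \<times> {0..<p})) = card {0..<p^2}"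
    using card_image[OF assms(1)] by (simp add: power2_eq_square)
  moreover have "f ` ({0..<p} \<times> {0..<p}) \<subseteq> {0..<p^2}" using assms(2) by auto
  ultimately show ?thesis using assms(1) by (simp add: bij_betw_def card_subset_eq)
qed

locale block_frame = p_semiregular +
  fixes c :: nat and g :: "nat \<Rightarrow> nat"
  assumes g_permutes: "g permutes {0..<p^2}"
    and g_z_commute: "\<And>y. g (z y) = z (g y)"
    and g_leaves_block: "\<And>k a. 0 < k \<Longrightarrow> k < p \<Longrightarrow> (g ^^ k) 0 \<noteq> (z ^^ a) 0"
    and g_funpow_p: "(g ^^ p) 0 = (z ^^ c) 0"
begin

definition frame :: "nat \<times> nat \<Rightarrow> nat"
  where "frame = (\<lambda>(a, b). (z ^^ a) ((g ^^ b) 0))"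

lemma g_funpow_in: "y < p^2 \<Longrightarrow> (g ^^ k) y < p^2"
  using permutes_in_image[OF permutes_funpow[OF g_permutes]] by simp

lemma frame_eq_imp_snd_eq:
  assumes "b \<le> b'" "b' < p" "a' < p" and eq: "frame (a, b) = frame (a', b')"
  shows "b = b'"
proof (rule ccontr)
  assume "b \<noteq> b'"
  have "(g ^^ b') 0 = (g ^^ (b + (b' - b))) 0" using assms(1) by simp
  also have "\<dots> = (g ^^ b) ((g ^^ (b' - b)) 0)" by (simp add: funpow_add)
  finally have "(g ^^ b) ((z ^^ a) 0) = (g ^^ b) ((z ^^ a') ((g ^^ (b' - b)) 0))"
    using eq funpow_funpow_commute[of g z, OF g_z_commute] by (simp add: frame_def)
  then have "(z ^^ a) 0 = (z ^^ a') ((g ^^ (b' - b)) 0)"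
    using inj_fn[OF permutes_inj[OF g_permutes]] by (simp add: inj_eq)
  then have "(z ^^ (p - a' + a)) 0 = (z ^^ (p - a')) ((z ^^ a') ((g ^^ (b' - b)) 0))"
    by (simp add: funpow_add)
  also have "\<dots> = (z ^^ (p - a' + a')) ((g ^^ (b' - b)) 0)" by (simp add: funpow_add)
  also have "\<dots> = (g ^^ (b' - b)) 0" using assms(3) z_funpow_p by simp
  finally have "(g ^^ (b' - b)) 0 = (z ^^ (p - a' + a)) 0" ..
  moreover have "0 < b' - b" "b' - b < p" using assms \<open>b \<noteq> b'\<close> by auto
  ultimately show False using g_leaves_block by blast
qed

lemma bij_frame: "bij_betw frame ({0..<p} \<times> {0..<p}) {0..<p^2}"
proof (rule bij_betw_coords_if_inj)
  show "inj_on frame ({0..<p} \<times> {0..<p})"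
  proof (rule inj_onI, clarify)
    fix a b a' b' assume ab: "a \<in> {0..<p}" "b \<in> {0..<p}" "a' \<in> {0..<p}" "b' \<in> {0..<p}"
      and eq: "frame (a, b) = frame (a', b')"
    have "b = b'"
      using frame_eq_imp_snd_eq[OF _ _ _ eq] frame_eq_imp_snd_eq[OF _ _ _ eq[symmetric]] ab
      by (cases "b \<le> b'") auto
    then have "a = a'"
      using z_funpow_inj[OF g_funpow_in[of 0 b]] eq ab p_pos by (simp add: frame_def)
    with \<open>b = b'\<close> show "a = a' \<and> b = b'" by simp
  qed
  show "frame (a, b) < p^2" for a b
    using z_funpow_in g_funpow_in p_pos by (simp add: frame_def)
qed

lemma z_frame: "z (frame (a, b)) = frame ((a + 1) mod p, b)"
  using z_funpow_mod[of "a + 1"] by (simp add: frame_def)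

lemma g_frame:
  assumes "b < p"
  shows "g (frame (a, b)) = frame (if b + 1 < p then (a, b + 1) else ((a + c) mod p, 0))"
proof -
  have "g (frame (a, b)) = (z ^^ a) ((g ^^ (b + 1)) 0)"
    using funpow_funpow_commute[of g z 1, OF g_z_commute] by (simp add: frame_def)
  moreover have "(z ^^ a) ((g ^^ (b + 1)) 0) = frame ((a + c) mod p, 0)" if "\<not> b + 1 < p"
  proof -
    have "b + 1 = p" using assms that by simp
    then have "(z ^^ a) ((g ^^ (b + 1)) 0) = (z ^^ a) ((z ^^ c) 0)" using g_funpow_p by simp
    also have "\<dots> = (z ^^ (a + c)) 0" by (simp add: funpow_add)
    also have "\<dots> = (z ^^ ((a + c) mod p)) 0" by (rule z_funpow_mod[symmetric])
    finally show ?thesis by (simp add: frame_def)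
  qed
  ultimately show ?thesis by (simp add: frame_def)
qed

lemma conj_onto_frame:
  assumes \<psi>: "bij_betw \<psi> ({0..<p} \<times> {0..<p}) {0..<p^2}"
    and u1: "u1 permutes {0..<p^2}" and u2: "u2 permutes {0..<p^2}"
    and u1_\<psi>: "\<And>a b. a < p \<Longrightarrow> b < p \<Longrightarrow> u1 (\<psi> (a, b)) = \<psi> ((a + 1) mod p, b)"
    and u2_\<psi>: "\<And>a b. a < p \<Longrightarrow> b < p \<Longrightarrow>
      u2 (\<psi> (a, b)) = \<psi> (if b + 1 < p then (a, b + 1) else ((a + c) mod p, 0))"
  shows "\<exists>s\<in>carrier (symN (p^2)). conj_symN (p^2) s u1 = z \<and> conj_symN (p^2) s u2 = g"
proof
  define B where "B = {0..<p} \<times> {0..<p}"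
  define s where "s = relabel B frame \<psi> (p^2)"
  show s: "s \<in> carrier (symN (p^2))"
    unfolding s_def B_def carrier_symN using relabel_permutes[OF bij_frame \<psi>] by simp
  have "s \<circ> z = u1 \<circ> s" unfolding s_def B_def
    by (rule relabel_intertwines[OF bij_frame \<psi> z_permutes u1, where f = "\<lambda>(a, b). ((a + 1) mod p, b)"])
      (auto simp: z_frame u1_\<psi> p_pos)
  moreover have "s \<circ> g = u2 \<circ> s" unfolding s_def B_def
    by (rule relabel_intertwines[OF bij_frame \<psi> g_permutes u2,
          where f = "\<lambda>(a, b). if b + 1 < p then (a, b + 1) else ((a + c) mod p, 0)"])
      (auto simp: g_frame u2_\<psi> p_pos)
  ultimately show "conj_symN (p^2) s u1 = z \<and> conj_symN (p^2) s u2 = g"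
    using conj_symN_eq_if_intertwines[OF s] z_permutes g_permutes u1 u2 by (simp add: carrier_symN)
qed

lemma block_frame_funpow:
  assumes p: "prime p" and c: "0 < c" "c < p"
  shows "block_frame p (z ^^ c) 1 g"
proof unfold_locales
  show "z ^^ c permutes {0..<p^2}" using permutes_funpow[OF z_permutes] .
  have "(z ^^ c) ^^ p = (z ^^ p) ^^ c" by (simp add: funpow_mult mult.commute)
  then show "(z ^^ c) ^^ p = id" by (simp add: z_funpow_p)
  show "((z ^^ c) ^^ k) y \<noteq> y" if "y < p^2" "0 < k" "k < p" for y k
  proof -
    have "\<not> p dvd c * k" using p c that by (auto simp: prime_dvd_mult_iff dest: dvd_imp_le)
    then have "0 < c * k mod p" "c * k mod p < p" using p_pos by (simp_all add: dvd_eq_mod_eq_0)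
    moreover have "((z ^^ c) ^^ k) y = (z ^^ (c * k mod p)) y" by (simp add: funpow_mult z_funpow_mod)
    ultimately show ?thesis using z_fixfree[OF that(1)] by simp
  qed
  show "g ((z ^^ c) y) = (z ^^ c) (g y)" for y
    using funpow_funpow_commute[of g z 1, OF g_z_commute] by simp
  show "(g ^^ k) 0 \<noteq> ((z ^^ c) ^^ a) 0" if "0 < k" "k < p" for k a
    using g_leaves_block[OF that] by (simp add: funpow_mult)
  show "(g ^^ p) 0 = ((z ^^ c) ^^ 1) 0" using g_funpow_p by simp
qed (use p_pos g_permutes in simp_all)

end

lemma (in p_semiregular) exists_block_frame:
  assumes p: "prime p" and perm: "\<And>h. h \<in> P \<Longrightarrow> h permutes {0..<p^2}"
    and trans: "\<And>y. y < p^2 \<Longrightarrow> \<exists>h\<in>P. h 0 = y"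
    and central: "\<And>h y. h \<in> P \<Longrightarrow> h (z y) = z (h y)"
    and order: "\<And>h. h \<in> P \<Longrightarrow> h ^^ (p ^ e) = id"
  shows "\<exists>g\<in>P. \<exists>c<p. block_frame p z c g"
proof -
  have "p < p^2" using prime_gt_1_nat[OF p] by (simp add: power2_eq_square)
  moreover have "card (block 0) = p" using card_block p_pos by simp
  ultimately have "block 0 \<noteq> {0..<p^2}" by (metis card_atLeastLessThan diff_zero less_irrefl)
  then obtain y where "y < p^2" "y \<notin> block 0" using block_subset[of 0] p_pos by fastforce
  then obtain g where g: "g \<in> P" "g 0 \<notin> block 0" using trans by blast
  obtain d where d: "0 < d" "d \<le> p" and d_dvd: "\<And>k. (g ^^ k) 0 \<in> block 0 \<longleftrightarrow> d dvd k"
    using block_return_time[OF perm[OF g(1)] central[OF g(1)], of "p ^ e"] order[OF g(1)] p_pos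
    by auto
  have "d dvd p ^ e" using d_dvd[of "p ^ e"] order[OF g(1)] block_self by simp
  then obtain f where f: "d = p ^ f" using divides_primepow_nat[OF p] by blast
  have "f \<noteq> 0" using f d_dvd[of 1] g(2) by auto
  moreover have "f < 2"
  proof (rule ccontr)
    assume "\<not> f < 2"
    then have "p ^ 2 \<le> d" unfolding f using p_pos by (intro power_increasing) auto
    then show False using d(2) \<open>p < p^2\<close> by simp
  qed
  ultimately have "d = p" using f by (cases f) auto
  have "(g ^^ p) 0 \<in> block 0" using d_dvd[of p] \<open>d = p\<close> by simp
  then obtain a where "(g ^^ p) 0 = (z ^^ a) 0" unfolding block_def by blast
  then have "(g ^^ p) 0 = (z ^^ (a mod p)) 0" by (simp add: z_funpow_mod)
  moreover have "(g ^^ k) 0 \<noteq> (z ^^ b) 0" if "0 < k" "k < p" for k b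
    using d_dvd[of k] \<open>d = p\<close> that unfolding block_def by (auto dest: dvd_imp_le)
  ultimately have "block_frame p z (a mod p) g"
    using perm[OF g(1)] central[OF g(1)] by unfold_locales
  moreover have "a mod p < p" using p_pos by simp
  ultimately show ?thesis using g(1) by blast
qed

definition rho_label :: "nat \<Rightarrow> nat \<times> nat \<Rightarrow> nat"
  where "rho_label p = (\<lambda>(a, b). b + p * a)"

text \<open>The orbit of tau through (0, a) runs along the row j = a up to (p - 2, a) and then jumps to
  (p - 1, a + 1); tau_label enumerates the points in this order.\<close>
definition tau_label :: "nat \<Rightarrow> nat \<times> nat \<Rightarrow> nat"
  where "tau_label p = (\<lambda>(a, b). if b < p - 1 then b + p * a else (p - 1) + p * ((a + 1) mod p))"

lemma bij_rho_label: "bij_betw (rho_label p) ({0..<p} \<times> {0..<p}) {0..<p^2}"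
proof (rule bij_betw_coords_if_inj)
  show "inj_on (rho_label p) ({0..<p} \<times> {0..<p})"
    by (rule inj_onI) (auto simp: rho_label_def coord_eq_iff)
qed (simp add: rho_label_def coord_lt_sq)

lemma rho1_rho_label: "a < p \<Longrightarrow> b < p \<Longrightarrow> rho1 p (rho_label p (a, b)) = rho_label p ((a + 1) mod p, b)"
  by (simp add: rho_label_def rho1_coord)

lemma rho2_rho_label:
  assumes "a < p" "b < p"
  shows "rho2 p (rho_label p (a, b)) = rho_label p (if b + 1 < p then (a, b + 1) else ((a + 0) mod p, 0))"
proof (cases "b + 1 < p")
  case False
  then have "b + 1 = p" using assms by simp
  then show ?thesis using assms by (simp add: rho_label_def rho2_coord)
qed (use assms in \<open>simp add: rho_label_def rho2_coord\<close>)

lemma bij_tau_label: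
  assumes p2: "p \<ge> 2"
  shows "bij_betw (tau_label p) ({0..<p} \<times> {0..<p}) {0..<p^2}"
proof (rule bij_betw_coords_if_inj)
  have pm: "p - 1 < p" using p2 by simp
  show "inj_on (tau_label p) ({0..<p} \<times> {0..<p})"
  proof (rule inj_onI, clarify)
    fix a b a' b' assume ab: "a \<in> {0..<p}" "b \<in> {0..<p}" "a' \<in> {0..<p}" "b' \<in> {0..<p}"
      and eq: "tau_label p (a, b) = tau_label p (a', b')"
    have m: "(a + 1) mod p < p" "(a' + 1) mod p < p" using p2 by simp_all
    consider "b < p - 1" "b' < p - 1" | "b = p - 1" "b' = p - 1" | "b < p - 1" "b' = p - 1"
      | "b = p - 1" "b' < p - 1"
      using ab by fastforce
    then show "a = a' \<and> b = b'"
    proof cases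
      case 1 then show ?thesis using eq ab by (auto simp: tau_label_def coord_eq_iff)
    next
      case 2
      then have "(a + 1) mod p = (a' + 1) mod p"
        using eq coord_eq_iff[OF pm pm] by (simp add: tau_label_def)
      then show ?thesis using 2 ab by (auto simp: mod_Suc split: if_splits)
    next
      case 3
      then have "b + p * a = (p - 1) + p * ((a' + 1) mod p)" using eq by (simp add: tau_label_def)
      then show ?thesis using coord_eq_iff[OF _ pm, of b] ab 3 by simp
    next
      case 4
      then have "b' + p * a' = (p - 1) + p * ((a + 1) mod p)" using eq by (simp add: tau_label_def)
      then show ?thesis using coord_eq_iff[OF _ pm, of b'] ab 4 by simp
    qed
  qed
  show "tau_label p (a, b) < p^2" if "a < p" "b < p" for a b
    using that coord_lt_sq[OF pm, of "(a + 1) mod p"] p2 by (auto simp: tau_label_def coord_lt_sq)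
qed

lemma rho1_tau_label:
  assumes "p \<ge> 2" "a < p" "b < p"
  shows "rho1 p (tau_label p (a, b)) = tau_label p ((a + 1) mod p, b)"
proof (cases "b < p - 1")
  case False
  have "p - 1 < p" "(a + 1) mod p < p" using assms by simp_all
  from rho1_coord[OF this] False show ?thesis by (simp add: tau_label_def)
qed (use assms in \<open>simp add: tau_label_def rho1_coord\<close>)

lemma tau_tau_label:
  assumes p2: "p \<ge> 2" and ab: "a < p" "b < p"
  shows "tau p (tau_label p (a, b)) = tau_label p (if b + 1 < p then (a, b + 1) else ((a + 1) mod p, 0))"
proof -
  have pm: "p - 1 < p" and A: "(a + 1) mod p < p" using p2 by simp_all
  consider "b + 1 < p - 1" | "b + 1 = p - 1" | "b = p - 1" using ab by linarith
  then show ?thesis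
  proof cases
    case 1 then show ?thesis using tau_coord[OF ab(2,1)] by (simp add: tau_label_def)
  next
    case 2 then show ?thesis using tau_coord[OF ab(2,1)] pm by (simp add: tau_label_def)
  next
    case 3 then show ?thesis using tau_coord[OF pm A] p2 by (simp add: tau_label_def)
  qed
qed

context block_frame
begin

lemma conj_rho1_rho2:
  assumes "c = 0"
  shows "\<exists>s\<in>carrier (symN (p^2)). conj_symN (p^2) s (rho1 p) = z \<and> conj_symN (p^2) s (rho2 p) = g"
  by (rule conj_onto_frame[OF bij_rho_label rho1_permutes[OF p_pos] rho2_permutes[OF p_pos]])
    (simp_all add: rho1_rho_label rho2_rho_label assms)

lemma conj_rho1_tau:
  assumes "c = 1" and "p \<ge> 2"
  shows "\<exists>s\<in>carrier (symN (p^2)). conj_symN (p^2) s (rho1 p) = z \<and> conj_symN (p^2) s (tau p) = g"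
  by (rule conj_onto_frame[OF bij_tau_label[OF assms(2)] rho1_permutes[OF p_pos] tau_permutes[OF p_pos]])
    (simp_all add: rho1_tau_label tau_tau_label assms)

end

lemma transitive_p_subgroup_conj_generators:
  assumes p: "prime p" and P: "subgroup P (symN (p^2))" and cP: "card P = p ^ a"
    and trans: "\<And>y. y < p^2 \<Longrightarrow> \<exists>h\<in>P. h 0 = y"
  shows "\<exists>s\<in>carrier (symN (p^2)). conj_symN (p^2) s (rho1 p) \<in> P
    \<and> (conj_symN (p^2) s (rho2 p) \<in> P \<or> conj_symN (p^2) s (tau p) \<in> P)"
proof -
  obtain z where zP: "z \<in> P" and "p_semiregular p z" and central: "\<And>h y. h \<in> P \<Longrightarrow> h (z y) = z (h y)"
    using transitive_p_subgroup_semiregular_center[OF p P cP trans] by blast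
  interpret p_semiregular p z by fact
  have perm: "\<And>h. h \<in> P \<Longrightarrow> h permutes {0..<p^2}" using subgroup_symN_permutes[OF P] .
  have order: "\<And>h. h \<in> P \<Longrightarrow> h ^^ (p ^ a) = id" using subgroup_symN_funpow_card[OF P] cP by simp
  obtain g c where gP: "g \<in> P" and "c < p" and frame: "block_frame p z c g"
    using exists_block_frame[OF p perm trans central order] by blast
  interpret block_frame p z c g by (fact frame)
  show ?thesis
  proof (cases "c = 0")
    case True
    then show ?thesis using conj_rho1_rho2 zP gP by blast
  next
    case False
    then interpret power: block_frame p "z ^^ c" 1 g
      using block_frame_funpow[OF p] \<open>c < p\<close> by simp
    show ?thesis
      using power.conj_rho1_tau[OF refl prime_ge_2_nat[OF p]] subgroup_symN_funpow_closed[OF P zP, of c] gP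
      by metis
  qed
qed

theorem lemma2p12:
  fixes p :: nat and G :: "(nat \<Rightarrow> nat) set"
  assumes "prime p" and "transitive_group (p^2) G"
  shows "\<exists>s \<in> carrier (symN (p^2)).
           P1 p \<subseteq> (\<lambda>g. s \<circ> g \<circ> inv\<^bsub>symN (p^2)\<^esub> s) ` G \<or> P1' p \<subseteq> (\<lambda>g. s \<circ> g \<circ> inv\<^bsub>symN (p^2)\<^esub> s) ` G"
proof -
  have p0: "p > 0" using prime_gt_0_nat[OF assms(1)] .
  have G: "subgroup G (symN (p^2))" using assms(2) unfolding transitive_group_def by simp
  obtain P a where P: "subgroup P (symN (p^2))" "P \<subseteq> G" "card P = p ^ a"
    and trans: "\<forall>y<p^2. \<exists>h\<in>P. h 0 = y"
    using transitive_sylow_subgroup[OF assms] by blast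
  obtain s where s: "s \<in> carrier (symN (p^2))"
    and conj: "conj_symN (p^2) s (rho1 p) \<in> G"
      "conj_symN (p^2) s (rho2 p) \<in> G \<or> conj_symN (p^2) s (tau p) \<in> G"
    using transitive_p_subgroup_conj_generators[OF assms(1) P(1,3)] trans P(2) by blast
  have gens: "rho1 p \<in> carrier (symN (p^2))" "rho2 p \<in> carrier (symN (p^2))" "tau p \<in> carrier (symN (p^2))"
    using rho1_permutes[OF p0] rho2_permutes[OF p0] tau_permutes[OF p0] by (simp_all add: carrier_symN)
  have gamma: "gamma p 1 = rho1 p" by (rule gamma_1_eq_rho1[OF assms(1)])
  have "P1' p \<subseteq> (\<lambda>g. s \<circ> g \<circ> inv\<^bsub>symN (p^2)\<^esub> s) ` G" if "conj_symN (p^2) s (rho2 p) \<in> G"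
    unfolding P1'_def by (intro generate_subset_conj_image[OF s G]) (use that gens conj(1) gamma in auto)
  moreover have "P1 p \<subseteq> (\<lambda>g. s \<circ> g \<circ> inv\<^bsub>symN (p^2)\<^esub> s) ` G" if "conj_symN (p^2) s (tau p) \<in> G"
    unfolding P1_def by (intro generate_subset_conj_image[OF s G]) (use that gens conj(1) gamma in auto)
  ultimately show ?thesis using s conj(2) by blast
qed

end
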